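(* Let $G=K_S(r,s)$ be a complete split graph. Then the sparing number of $G$ equals the sparing number of a maximal clique in $G$.
   Context: A split graph is a graph whose vertex set can be partitioned into a clique $K_r$ and an independent set $S$. It is a complete split graph, denoted $K_S(r,s)$ with $r=|V(K_r)|$ and $s=|S|$, if every vertex of $S$ is adjacent to every vertex of $K_r$. Let $\mathbb{N}_0$ be the set of non-negative integers; for $A,B\subseteq\mathbb{N}_0$, $A+B=\{a+b:a\in A,b\in B\}$. An integer additive set-indexer (IASI) of a graph $G$ is an injective map $f:V(G)\to\mathcal{P}(\mathbb{N}_0)$ such that $f^+:E(G)\to\mathcal{P}(\mathbb{N}_0)$, $f^+(uv)=f(u)+f(v)$, is injective. A weak IASI is an IASI with $|f^+(uv)|=\max(|f(u)|,|f(v)|)$ for every edge $uv$. An edge $e$ is mono-indexed if $|f^+(e)|=1$. The sparing number $\varphi(G)$ is the minimum number of mono-indexed edges over all weak IASIs of $G$. *)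

theory Defs
  imports Main "HOL-Library.Set_Algebras"
begin

definition simple_graph :: "'a set \<Rightarrow> 'a set set \<Rightarrow> bool" where
  "simple_graph V E \<longleftrightarrow> finite V \<and>
     (\<forall>e\<in>E. \<exists>u v. e = {u, v} \<and> u \<noteq> v \<and> u \<in> V \<and> v \<in> V)"

definition complete_split_graph ::
  "'a set \<Rightarrow> 'a set set \<Rightarrow> 'a set \<Rightarrow> 'a set \<Rightarrow> nat \<Rightarrow> nat \<Rightarrow> bool" where
  "complete_split_graph V E K S r s \<longleftrightarrow> finite V \<and>
     V = K \<union> S \<and> K \<inter> S = {} \<and> card K = r \<and> card S = s \<and>
     E = {{u, v} | u v. u \<in> K \<and> v \<in> K \<and> u \<noteq> v} \<union> {{u, v} | u v. u \<in> K \<and> v \<in> S}"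

definition is_clique :: "'a set \<Rightarrow> 'a set set \<Rightarrow> 'a set \<Rightarrow> bool" where
  "is_clique V E C \<longleftrightarrow> C \<subseteq> V \<and> (\<forall>u\<in>C. \<forall>v\<in>C. u \<noteq> v \<longrightarrow> {u, v} \<in> E)"

definition maximal_clique :: "'a set \<Rightarrow> 'a set set \<Rightarrow> 'a set \<Rightarrow> bool" where
  "maximal_clique V E C \<longleftrightarrow> is_clique V E C \<and> (\<forall>D. is_clique V E D \<and> C \<subseteq> D \<longrightarrow> D = C)"

definition induced_edges :: "'a set set \<Rightarrow> 'a set \<Rightarrow> 'a set set" where
  "induced_edges E C = {e \<in> E. e \<subseteq> C}"

definition iasi :: "'a set \<Rightarrow> 'a set set \<Rightarrow> ('a \<Rightarrow> nat set) \<Rightarrow> bool" where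
  "iasi V E f \<longleftrightarrow> inj_on f V \<and> (\<forall>v\<in>V. finite (f v) \<and> f v \<noteq> {}) \<and>
     (\<forall>u v u' v'. {u, v} \<in> E \<longrightarrow> {u', v'} \<in> E \<longrightarrow> f u + f v = f u' + f v' \<longrightarrow> {u, v} = {u', v'})"

definition weak_iasi :: "'a set \<Rightarrow> 'a set set \<Rightarrow> ('a \<Rightarrow> nat set) \<Rightarrow> bool" where
  "weak_iasi V E f \<longleftrightarrow> iasi V E f \<and>
     (\<forall>u v. {u, v} \<in> E \<longrightarrow> card (f u + f v) = max (card (f u)) (card (f v)))"

definition mono_indexed_edges :: "'a set set \<Rightarrow> ('a \<Rightarrow> nat set) \<Rightarrow> 'a set set" where
  "mono_indexed_edges E f = {e \<in> E. \<exists>u v. e = {u, v} \<and> card (f u + f v) = 1}"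

definition sparing_number :: "'a set \<Rightarrow> 'a set set \<Rightarrow> nat" where
  "sparing_number V E = Min {card (mono_indexed_edges E f) | f. weak_iasi V E f}"

end

theory Submission
  imports Defs
begin

text \<open>In a weak IASI two adjacent vertices cannot both carry labels with at least two
  elements, because then the sumset is strictly larger than either label. So in a clique on
  n + 1 vertices all but at most one vertex carry singletons, and the n choose 2 edges among
  them are mono-indexed. Conversely, if every edge meets a vertex set K of size at most n,
  labelling K by singletons {2^i} and the other vertices by {0, 2^i}, with distinct i, gives a
  weak IASI whose mono-indexed edges lie inside K. In K_S(r, s) with s > 0 the clique part K
  meets every edge and the maximal cliques are K \<union> {v} with v \<in> S; the same holds in the
  subgraph induced by such a clique, so both sparing numbers are r choose 2. For s = 0 the
  only maximal clique is the whole graph.\<close>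

lemma singleton_set_plus: "{a} + B = (+) a ` B"
  by (auto simp: set_plus_def)

lemma card_singleton_set_plus:
  fixes a :: "'a::cancel_semigroup_add"
  shows "card ({a} + B) = card B"
  by (simp add: singleton_set_plus card_image)

lemma card_le_card_set_plus:
  fixes A B :: "'a::cancel_semigroup_add set"
  assumes "finite A" "finite B" "a \<in> A"
  shows "card B \<le> card (A + B)"
proof -
  have "{a} + B \<subseteq> A + B"
    using assms(3) by (auto simp: set_plus_def)
  then show ?thesis
    using card_mono[OF finite_set_plus[OF assms(1,2)]] card_singleton_set_plus by metis
qed

lemma card_less_card_set_plus:
  fixes A B :: "'a::linordered_cancel_ab_semigroup_add set"
  assumes "finite A" "finite B" "B \<noteq> {}" "card A \<ge> 2"
  shows "card B < card (A + B)"
proof -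
  obtain T where "T \<subseteq> A" "card T = 2"
    using obtain_subset_with_card_n[OF assms(4)] by metis
  then obtain x y where "x \<in> A" "y \<in> A" "x \<noteq> y"
    by (auto simp: card_2_iff)
  then obtain a a' where a: "a \<in> A" "a' \<in> A" "a < a'"
    by (metis linorder_neqE)
  define b where "b = Max B"
  have b: "b \<in> B" "\<And>y. y \<in> B \<Longrightarrow> y \<le> b"
    using assms(2,3) by (simp_all add: b_def)
  have "a' + b \<notin> {a} + B"
  proof
    assume "a' + b \<in> {a} + B"
    then obtain y where "y \<in> B" "a' + b = a + y"
      by (auto simp: set_plus_def)
    moreover have "a + y < a' + b"
      using a(3) b(2)[OF \<open>y \<in> B\<close>] by (simp add: add_less_le_mono)
    ultimately show False by simp
  qed
  then have "card B < card (insert (a' + b) ({a} + B))"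
    using assms(2) by (simp add: card_singleton_set_plus finite_set_plus)
  also have "\<dots> \<le> card (A + B)"
    using a b assms(1,2) by (intro card_mono finite_set_plus) (auto simp: set_plus_def)
  finally show ?thesis .
qed

lemma card_set_plus_eq_max_imp_singleton:
  fixes A B :: "'a::linordered_cancel_ab_semigroup_add set"
  assumes "finite A" "finite B" "A \<noteq> {}" "B \<noteq> {}"
    and "card (A + B) = max (card A) (card B)"
  shows "card A = 1 \<or> card B = 1"
proof (rule ccontr)
  assume "\<not> ?thesis"
  moreover have "card A \<noteq> 0" "card B \<noteq> 0"
    using assms(1-4) by simp_all
  ultimately have "card A \<ge> 2" "card B \<ge> 2"
    by simp_all
  then have "card B < card (A + B)" "card A < card (B + A)"
    using card_less_card_set_plus assms(1-4) by blast+
  then show False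
    using assms(5) by (simp add: add.commute)
qed

lemma card_set_plus_eq_1_imp:
  fixes A B :: "'a::cancel_ab_semigroup_add set"
  assumes "finite A" "finite B" "A \<noteq> {}" "B \<noteq> {}" "card (A + B) = 1"
  shows "card A = 1" "card B = 1"
proof -
  have "card B \<le> 1" "card A \<le> 1"
    using card_le_card_set_plus[of A B] card_le_card_set_plus[of B A] assms
    by (auto simp: add.commute)
  then show "card A = 1" "card B = 1"
    using assms(1-4) by (simp_all add: le_Suc_eq)
qed

lemma Max_set_plus:
  fixes A B :: "'a::{linorder, ordered_ab_semigroup_add} set"
  assumes "finite A" "A \<noteq> {}" "finite B" "B \<noteq> {}"
  shows "Max (A + B) = Max A + Max B"
proof (rule Max_eqI)
  show "Max A + Max B \<in> A + B"
    using assms by (intro set_plus_intro) simp_all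
qed (use assms in \<open>auto simp: set_plus_def intro: add_mono finite_set_plus\<close>)

lemma power2_sum_eq_imp_doubleton_eq:
  fixes i j k l :: nat
  assumes "i \<noteq> j" "k \<noteq> l" "(2::nat) ^ i + 2 ^ j = 2 ^ k + 2 ^ l"
  shows "{i, j} = {k, l}"
proof -
  have bits: "{n. bit ((2::nat) ^ x + 2 ^ y) n} = {x, y}" if "x \<noteq> y" for x y
    using that by (subst disjunctive_add_eq_or) (auto simp: bit_eq_iff bit_simps)
  show ?thesis
    using bits[OF assms(1)] bits[OF assms(2)] assms(3) by simp
qed

lemma simple_graph_edgeD:
  assumes "simple_graph V E" "{u, v} \<in> E"
  shows "u \<noteq> v \<and> u \<in> V \<and> v \<in> V"
proof -
  obtain a b where "{u, v} = {a, b}" "a \<noteq> b" "a \<in> V" "b \<in> V"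
    using assms unfolding simple_graph_def by blast
  then show ?thesis
    by (auto simp: doubleton_eq_iff)
qed

lemma simple_graph_edges_subset:
  assumes "simple_graph V E"
  shows "E \<subseteq> Pow V"
  using assms unfolding simple_graph_def by auto

lemma simple_graph_finite_edges:
  assumes "simple_graph V E"
  shows "finite E"
  using finite_subset[OF simple_graph_edges_subset[OF assms]] assms
  unfolding simple_graph_def by simp

lemma simple_graph_induced_edges:
  assumes "simple_graph V E" "C \<subseteq> V"
  shows "simple_graph C (induced_edges E C)"
proof -
  have "finite C"
    using assms finite_subset unfolding simple_graph_def by blast
  moreover have "\<exists>u v. e = {u, v} \<and> u \<noteq> v \<and> u \<in> C \<and> v \<in> C" if "e \<in> induced_edges E C" for e
  proof -
    have "e \<in> E" "e \<subseteq> C"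
      using that unfolding induced_edges_def by simp_all
    then obtain u v where "e = {u, v}" "u \<noteq> v"
      using assms(1) unfolding simple_graph_def by blast
    then show ?thesis
      using \<open>e \<subseteq> C\<close> by auto
  qed
  ultimately show ?thesis
    by (simp add: simple_graph_def)
qed

lemma card_induced_edges_le:
  assumes "simple_graph V E" "finite K"
  shows "card (induced_edges E K) \<le> card K choose 2"
proof -
  have "induced_edges E K \<subseteq> {B. B \<subseteq> K \<and> card B = 2}"
    using assms(1) unfolding simple_graph_def induced_edges_def card_2_iff by blast
  then have "card (induced_edges E K) \<le> card {B. B \<subseteq> K \<and> card B = 2}"
    by (rule card_mono[rotated]) (use assms(2) in simp)
  then show ?thesis
    by (simp add: n_subsets[OF assms(2)])
qed

lemma weak_iasi_labels:
  assumes "weak_iasi V E f" "v \<in> V"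
  shows "finite (f v)" "f v \<noteq> {}"
  using assms unfolding weak_iasi_def iasi_def by simp_all

lemma weak_iasi_clique_singleton_labels:
  assumes f: "weak_iasi V E f" and A: "is_clique V E A"
  obtains x where "\<And>y. y \<in> A - {x} \<Longrightarrow> card (f y) = 1"
proof -
  have adjacent: "card (f y) = 1 \<or> card (f z) = 1" if "y \<in> A" "z \<in> A" "y \<noteq> z" for y z
  proof -
    have "y \<in> V" "z \<in> V" "{y, z} \<in> E"
      using A that unfolding is_clique_def by auto
    then show ?thesis
      using f weak_iasi_labels[OF f] card_set_plus_eq_max_imp_singleton
      unfolding weak_iasi_def by metis
  qed
  show ?thesis
  proof (cases "\<exists>x\<in>A. card (f x) \<noteq> 1")
    case True
    then obtain x where "x \<in> A" "card (f x) \<noteq> 1" by blast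
    then show ?thesis
      using adjacent that by blast
  next
    case False
    then show ?thesis
      using that by blast
  qed
qed

lemma card_mono_indexed_edges_ge_clique:
  assumes f: "weak_iasi V E f" and "finite E" and A: "is_clique V E A" "finite A"
  shows "(card A - 1) choose 2 \<le> card (mono_indexed_edges E f)"
proof -
  obtain x where singleton: "\<And>y. y \<in> A - {x} \<Longrightarrow> card (f y) = 1"
    using weak_iasi_clique_singleton_labels[OF f A(1)] by blast
  have "{B. B \<subseteq> A - {x} \<and> card B = 2} \<subseteq> mono_indexed_edges E f"
  proof
    fix B assume "B \<in> {B. B \<subseteq> A - {x} \<and> card B = 2}"
    then obtain u v where B: "B = {u, v}" "u \<noteq> v" "u \<in> A - {x}" "v \<in> A - {x}"
      by (auto simp: card_2_iff)
    obtain a b where "f u = {a}" "f v = {b}"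
      using singleton B(3,4) by (meson card_1_singletonE)
    then have "card (f u + f v) = 1"
      by (simp add: card_singleton_set_plus)
    moreover have "B \<in> E"
      using A(1) B unfolding is_clique_def by simp
    ultimately show "B \<in> mono_indexed_edges E f"
      using B(1) unfolding mono_indexed_edges_def by blast
  qed
  moreover have "finite (mono_indexed_edges E f)"
    using \<open>finite E\<close> by (simp add: mono_indexed_edges_def)
  ultimately have "card {B. B \<subseteq> A - {x} \<and> card B = 2} \<le> card (mono_indexed_edges E f)"
    by (simp add: card_mono)
  then have "card (A - {x}) choose 2 \<le> card (mono_indexed_edges E f)"
    using n_subsets[of "A - {x}" 2] A(2) by simp
  moreover have "card A - 1 \<le> card (A - {x})"
    using diff_card_le_card_Diff[of "{x}" A] by simp
  ultimately show ?thesis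
    using binomial_right_mono le_trans by blast
qed

definition power2_labelling :: "('a \<Rightarrow> nat) \<Rightarrow> 'a set \<Rightarrow> 'a \<Rightarrow> nat set" where
  "power2_labelling idx K x = (if x \<in> K then {2 ^ idx x} else {0, 2 ^ idx x})"

lemma power2_labelling_finite_nonempty:
  "finite (power2_labelling idx K x)" "power2_labelling idx K x \<noteq> {}"
  by (simp_all add: power2_labelling_def)

lemma card_power2_labelling_eq_1_iff: "card (power2_labelling idx K x) = 1 \<longleftrightarrow> x \<in> K"
  by (simp add: power2_labelling_def)

lemma Max_power2_labelling: "Max (power2_labelling idx K x) = 2 ^ idx x"
  by (simp add: power2_labelling_def)

text \<open>The largest element of the label of an edge is 2^idx u + 2^idx v, and such a sum of
  two distinct powers of two determines the exponents.\<close>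
lemma iasi_power2_labelling:
  assumes G: "simple_graph V E" and idx: "inj_on idx V"
  shows "iasi V E (power2_labelling idx K)"
proof -
  let ?f = "power2_labelling idx K"
  have Max_edge_label: "Max (?f u + ?f v) = 2 ^ idx u + 2 ^ idx v" for u v
    by (simp add: Max_set_plus power2_labelling_finite_nonempty Max_power2_labelling)
  show ?thesis
    unfolding iasi_def
  proof (intro conjI allI impI ballI)
    show "inj_on ?f V"
      using idx by (auto simp: inj_on_def Max_power2_labelling dest!: arg_cong[where f = Max])
    show "finite (?f v)" "?f v \<noteq> {}" for v
      by (rule power2_labelling_finite_nonempty)+
  next
    fix u v u' v'
    assume edges: "{u, v} \<in> E" "{u', v'} \<in> E" and labels: "?f u + ?f v = ?f u' + ?f v'"
    have uv: "u \<noteq> v" "u \<in> V" "v \<in> V" "u' \<noteq> v'" "u' \<in> V" "v' \<in> V"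
      using simple_graph_edgeD[OF G] edges by blast+
    then have "idx u \<noteq> idx v" "idx u' \<noteq> idx v'"
      using idx by (auto simp: inj_on_def)
    moreover have "(2::nat) ^ idx u + 2 ^ idx v = 2 ^ idx u' + 2 ^ idx v'"
      using labels Max_edge_label by metis
    ultimately have "{idx u, idx v} = {idx u', idx v'}"
      by (rule power2_sum_eq_imp_doubleton_eq)
    then have "idx ` {u, v} = idx ` {u', v'}"
      by simp
    moreover have "{u, v} \<subseteq> V" "{u', v'} \<subseteq> V"
      using uv by simp_all
    ultimately show "{u, v} = {u', v'}"
      using inj_on_image_eq_iff[OF idx] by blast
  qed
qed

lemma weak_iasi_power2_labelling:
  assumes "simple_graph V E" "inj_on idx V"
    and cover: "\<And>u v. {u, v} \<in> E \<Longrightarrow> u \<in> K \<or> v \<in> K"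
  shows "weak_iasi V E (power2_labelling idx K)"
proof -
  let ?f = "power2_labelling idx K"
  have singleton_plus: "card (?f x + ?f y) = max (card (?f x)) (card (?f y))" if "x \<in> K" for x y
  proof -
    have "?f x = {2 ^ idx x}"
      using that by (simp add: power2_labelling_def)
    then have "card (?f x + ?f y) = card (?f y)" "card (?f x) = 1"
      by (simp_all add: card_singleton_set_plus)
    moreover have "1 \<le> card (?f y)"
      using power2_labelling_finite_nonempty[of idx K y] by (simp add: Suc_le_eq card_gt_0_iff)
    ultimately show ?thesis
      by simp
  qed
  have "card (?f u + ?f v) = max (card (?f u)) (card (?f v))" if "{u, v} \<in> E" for u v
    using cover[OF that] singleton_plus[of u v] singleton_plus[of v u]
    by (metis add.commute max.commute)
  then show ?thesis
    unfolding weak_iasi_def using iasi_power2_labelling assms(1,2) by blast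
qed

lemma mono_indexed_edges_power2_labelling:
  "mono_indexed_edges E (power2_labelling idx K) \<subseteq> induced_edges E K"
proof
  fix e assume "e \<in> mono_indexed_edges E (power2_labelling idx K)"
  then obtain u v where e: "e \<in> E" "e = {u, v}"
    and "card (power2_labelling idx K u + power2_labelling idx K v) = 1"
    unfolding mono_indexed_edges_def by blast
  then have "card (power2_labelling idx K u) = 1" "card (power2_labelling idx K v) = 1"
    using card_set_plus_eq_1_imp power2_labelling_finite_nonempty by metis+
  then show "e \<in> induced_edges E K"
    using e unfolding induced_edges_def card_power2_labelling_eq_1_iff by simp
qed

lemma sparing_number_eqI:
  assumes "finite E"
    and lower: "\<And>f. weak_iasi V E f \<Longrightarrow> n \<le> card (mono_indexed_edges E f)"
    and g: "weak_iasi V E g" "card (mono_indexed_edges E g) \<le> n"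
  shows "sparing_number V E = n"
  unfolding sparing_number_def
proof (rule Min_eqI)
  have "mono_indexed_edges E f \<subseteq> E" for f
    by (auto simp: mono_indexed_edges_def)
  then have "card (mono_indexed_edges E f) \<le> card E" for f
    using \<open>finite E\<close> by (simp add: card_mono)
  then have "{card (mono_indexed_edges E f) | f. weak_iasi V E f} \<subseteq> {..card E}"
    by blast
  then show "finite {card (mono_indexed_edges E f) | f. weak_iasi V E f}"
    using finite_subset by blast
  show "n \<in> {card (mono_indexed_edges E f) | f. weak_iasi V E f}"
    using g lower[OF g(1)] le_antisym by blast
qed (use lower in blast)

lemma sparing_number_eq_clique_cover:
  assumes G: "simple_graph V E" and A: "is_clique V E A"
    and cover: "\<And>u v. {u, v} \<in> E \<Longrightarrow> u \<in> K \<or> v \<in> K"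
    and "K \<subseteq> V" "card K < card A"
  shows "sparing_number V E = (card A - 1) choose 2"
proof -
  have "finite V"
    using G unfolding simple_graph_def by blast
  then have "finite A" "finite K"
    using A \<open>K \<subseteq> V\<close> finite_subset unfolding is_clique_def by blast+
  obtain idx :: "'a \<Rightarrow> nat" where idx: "inj_on idx V"
    using \<open>finite V\<close> finite_imp_inj_to_nat_seg by metis
  define g where "g = power2_labelling idx K"
  have g: "weak_iasi V E g" "mono_indexed_edges E g \<subseteq> induced_edges E K"
    unfolding g_def using weak_iasi_power2_labelling[OF G idx cover]
      mono_indexed_edges_power2_labelling by blast+
  have "card (mono_indexed_edges E g) \<le> card (induced_edges E K)"
    using g(2) simple_graph_finite_edges[OF G]
    by (intro card_mono) (auto simp: induced_edges_def)
  also have "\<dots> \<le> card K choose 2"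
    using card_induced_edges_le[OF G \<open>finite K\<close>] .
  also have "\<dots> \<le> (card A - 1) choose 2"
    using \<open>card K < card A\<close> by (intro binomial_right_mono) simp
  finally have upper: "card (mono_indexed_edges E g) \<le> (card A - 1) choose 2" .
  show ?thesis
    by (rule sparing_number_eqI[OF simple_graph_finite_edges[OF G] _ g(1) upper])
      (rule card_mono_indexed_edges_ge_clique[OF _ simple_graph_finite_edges[OF G] A \<open>finite A\<close>])
qed

lemma is_clique_induced_edges:
  assumes "is_clique V E C"
  shows "is_clique C (induced_edges E C) C"
  using assms unfolding is_clique_def induced_edges_def by blast

lemma complete_split_graph_edge_iff:
  assumes "complete_split_graph V E K S r s"
  shows "{u, v} \<in> E \<longleftrightarrow> u \<noteq> v \<and> u \<in> V \<and> v \<in> V \<and> (u \<in> K \<or> v \<in> K)"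
proof -
  have V: "V = K \<union> S" "K \<inter> S = {}"
    and E: "E = {{u, v} | u v. u \<in> K \<and> v \<in> K \<and> u \<noteq> v} \<union> {{u, v} | u v. u \<in> K \<and> v \<in> S}"
    using assms unfolding complete_split_graph_def by blast+
  show ?thesis
  proof
    assume "{u, v} \<in> E"
    then show "u \<noteq> v \<and> u \<in> V \<and> v \<in> V \<and> (u \<in> K \<or> v \<in> K)"
      unfolding E V using V(2) by (auto simp: doubleton_eq_iff)
  next
    assume uv: "u \<noteq> v \<and> u \<in> V \<and> v \<in> V \<and> (u \<in> K \<or> v \<in> K)"
    then consider "u \<in> K" "v \<in> K" | "u \<in> K" "v \<in> S" | "v \<in> K" "u \<in> S"
      using V(1) by blast
    then show "{u, v} \<in> E"
      unfolding E using uv by cases (auto simp: insert_commute)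
  qed
qed

lemma complete_split_graph_simple:
  assumes "complete_split_graph V E K S r s"
  shows "simple_graph V E"
proof -
  have "\<exists>u v. e = {u, v} \<and> u \<noteq> v \<and> u \<in> V \<and> v \<in> V" if "e \<in> E" for e
  proof -
    obtain u v where "e = {u, v}"
      using assms \<open>e \<in> E\<close> unfolding complete_split_graph_def by blast
    then show ?thesis
      using complete_split_graph_edge_iff[OF assms] \<open>e \<in> E\<close> by blast
  qed
  then show ?thesis
    using assms unfolding simple_graph_def complete_split_graph_def by blast
qed

lemma complete_split_graph_maximal_clique:
  assumes G: "complete_split_graph V E K S r s" and C: "maximal_clique V E C"
    and "S \<noteq> {}"
  obtains v where "v \<in> S" "C = insert v K"
proof -
  have V: "V = K \<union> S" "K \<inter> S = {}"
    using G unfolding complete_split_graph_def by blast+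
  note edge_iff = complete_split_graph_edge_iff[OF G]
  have "C \<subseteq> V" and C_edges: "\<And>u v. u \<in> C \<Longrightarrow> v \<in> C \<Longrightarrow> u \<noteq> v \<Longrightarrow> {u, v} \<in> E"
    using C unfolding maximal_clique_def is_clique_def by blast+
  have independent: "u = v" if "u \<in> C \<inter> S" "v \<in> C \<inter> S" for u v
    using C_edges[of u v] edge_iff V(2) that by blast
  obtain v where v: "v \<in> S" "C \<inter> S \<subseteq> {v}"
    using \<open>S \<noteq> {}\<close> independent by blast
  have "is_clique V E (insert v K)"
    unfolding is_clique_def edge_iff using V v(1) by blast
  moreover have "C \<subseteq> insert v K"
    using \<open>C \<subseteq> V\<close> V(1) v(2) by blast
  ultimately have "C = insert v K"
    using C unfolding maximal_clique_def by blast
  then show ?thesis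
    using that v(1) by blast
qed

lemma complete_split_graph_maximal_clique_eq_vertices:
  assumes G: "complete_split_graph V E K {} r s" and C: "maximal_clique V E C"
  shows "C = V"
proof -
  have "is_clique V E V"
    unfolding is_clique_def complete_split_graph_edge_iff[OF G]
    using G unfolding complete_split_graph_def by blast
  moreover have "C \<subseteq> V"
    using C unfolding maximal_clique_def is_clique_def by blast
  ultimately show ?thesis
    using C unfolding maximal_clique_def by blast
qed

theorem theorem2p6:
  fixes V K S :: "'a set" and E :: "'a set set" and r s :: nat and C :: "'a set"
  assumes "complete_split_graph V E K S r s"
    and "maximal_clique V E C"
  shows "sparing_number V E = sparing_number C (induced_edges E C)"
proof (cases "S = {}")
  case True
  then have "C = V"
    using complete_split_graph_maximal_clique_eq_vertices assms by blast
  moreover have "induced_edges E V = E"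
    using simple_graph_edges_subset[OF complete_split_graph_simple[OF assms(1)]]
    unfolding induced_edges_def by auto
  ultimately show ?thesis
    by simp
next
  case False
  obtain v where v: "v \<in> S" "C = insert v K"
    using complete_split_graph_maximal_clique[OF assms False] by blast
  have G: "simple_graph V E"
    using complete_split_graph_simple[OF assms(1)] .
  have cover: "u \<in> K \<or> w \<in> K" if "{u, w} \<in> E" for u w
    using complete_split_graph_edge_iff[OF assms(1)] that by blast
  have KC: "K \<subseteq> C" and CV: "C \<subseteq> V" and clique: "is_clique V E C"
    using assms(2) v unfolding maximal_clique_def is_clique_def by auto
  have smaller: "card K < card C"
    using assms(1) v unfolding complete_split_graph_def by (auto simp: card_insert_if)
  have induced_cover: "u \<in> K \<or> w \<in> K" if "{u, w} \<in> induced_edges E C" for u w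
    using cover that unfolding induced_edges_def by blast
  have "sparing_number V E = (card C - 1) choose 2"
    using sparing_number_eq_clique_cover[OF G clique cover] KC CV smaller by blast
  moreover have "sparing_number C (induced_edges E C) = (card C - 1) choose 2"
    using sparing_number_eq_clique_cover[OF simple_graph_induced_edges[OF G CV]
        is_clique_induced_edges[OF clique] induced_cover KC smaller] .
  ultimately show ?thesis
    by simp
qed

end
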